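(* Let $K$ be a field, $S=K[x_1,\dots,x_n]$, $M$ a finitely generated graded $S$-module, ${\bf f}=f_1,\dots,f_m$ a sequence of homogeneous polynomials, $I=({\bf f})$, and $g_1,\dots,g_v\in I$ homogeneous; set ${\bf g}=g_1,\dots,g_v$. Then for every $i$, $$\operatorname{reg} Z_i({\bf f},M)\leq \operatorname{reg} Z_i({\bf f},{\bf g},M).$$
   Context: For a sequence ${\bf h}=h_1,\dots,h_r$ of homogeneous polynomials (not necessarily a minimal generating set of the ideal it generates), $K({\bf h},M)$ denotes the Koszul complex $\bigwedge^\bullet G\otimes_S M$, where $G=\bigoplus_{j=1}^r S(-\deg h_j)$ with basis $e_j$ of degree $\deg h_j$ and differential induced by $e_j\mapsto h_j$ (degree $0$); $Z_i({\bf h},M)$ is its graded module of cycles in homological position $i$. $({\bf f},{\bf g})$ denotes the concatenated sequence $f_1,\dots,f_m,g_1,\dots,g_v$. $\operatorname{reg}$ denotes Castelnuovo–Mumford regularity ($-\infty$ for the zero module). *)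

theory Defs
  imports Complex_Main "HOL-Library.Poly_Mapping" "HOL-Library.Function_Algebras"
          "HOL-Library.Extended_Real"
begin

text \<open>Polynomials with coefficients in 'k: finitely supported maps from monomials
  (exponent vectors, themselves finitely supported maps nat => nat) to coefficients.\<close>
type_synonym 'k mpoly = "(nat \<Rightarrow>\<^sub>0 nat) \<Rightarrow>\<^sub>0 'k"

definition mdeg :: "(nat \<Rightarrow>\<^sub>0 nat) \<Rightarrow> nat" where
  "mdeg m = (\<Sum>i\<in>Poly_Mapping.keys m. Poly_Mapping.lookup m i)"

definition polys_in :: "nat \<Rightarrow> 'k::zero mpoly set" where
  "polys_in n = {p. \<forall>m\<in>Poly_Mapping.keys p. Poly_Mapping.keys m \<subseteq> {..<n}}"

definition var :: "nat \<Rightarrow> 'k::{zero,one} mpoly" where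
  "var i = Poly_Mapping.single (Poly_Mapping.single i 1) 1"

definition homog_of :: "nat \<Rightarrow> 'k::zero mpoly \<Rightarrow> bool" where
  "homog_of d p \<longleftrightarrow> (\<forall>m\<in>Poly_Mapping.keys p. mdeg m = d)"

definition is_homog :: "'k::zero mpoly \<Rightarrow> bool" where
  "is_homog p \<longleftrightarrow> (\<exists>d. homog_of d p)"

text \<open>Degree of a homogeneous polynomial (convention: 0 for the zero polynomial).\<close>
definition hdeg :: "'k::zero mpoly \<Rightarrow> nat" where
  "hdeg p = (if p = 0 then 0 else mdeg (SOME m. m \<in> Poly_Mapping.keys p))"

definition in_ideal :: "nat \<Rightarrow> 'k::comm_ring_1 mpoly set \<Rightarrow> 'k mpoly \<Rightarrow> bool" where
  "in_ideal n F p \<longleftrightarrow> (\<exists>c. (\<forall>q\<in>F. c q \<in> polys_in n) \<and> p = (\<Sum>q\<in>F. c q * q))"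

text \<open>A graded module is given inside an ambient abelian group 'm by its carrier,
  the scalar action of polynomials, and its homogeneous components (indexed by int).\<close>
record ('p, 'm) gmod =
  carr :: "'m set"
  act :: "'p \<Rightarrow> 'm \<Rightarrow> 'm"
  comp :: "int \<Rightarrow> 'm set"

definition subgrp :: "'m::ab_group_add set \<Rightarrow> bool" where
  "subgrp A \<longleftrightarrow> 0 \<in> A \<and> (\<forall>u\<in>A. \<forall>v\<in>A. u + v \<in> A) \<and> (\<forall>u\<in>A. - u \<in> A)"

definition graded_module :: "nat \<Rightarrow> ('k::field mpoly, 'm::ab_group_add) gmod \<Rightarrow> bool" where
  "graded_module n M \<longleftrightarrow>
     subgrp (carr M)
   \<and> (\<forall>p\<in>polys_in n. \<forall>u\<in>carr M. act M p u \<in> carr M)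
   \<and> (\<forall>p\<in>polys_in n. \<forall>q\<in>polys_in n. \<forall>u\<in>carr M.
        act M (p + q) u = act M p u + act M q u \<and> act M (p * q) u = act M p (act M q u))
   \<and> (\<forall>p\<in>polys_in n. \<forall>u\<in>carr M. \<forall>v\<in>carr M. act M p (u + v) = act M p u + act M p v)
   \<and> (\<forall>u\<in>carr M. act M 1 u = u)
   \<and> (\<forall>d. subgrp (comp M d) \<and> comp M d \<subseteq> carr M)
   \<and> (\<forall>p\<in>polys_in n. \<forall>e d u. homog_of e p \<longrightarrow> u \<in> comp M d \<longrightarrow> act M p u \<in> comp M (d + int e))
   \<and> (\<forall>u\<in>carr M. \<exists>!c :: int \<Rightarrow> 'm. finite {d. c d \<noteq> 0} \<and> (\<forall>d. c d \<in> comp M d)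
                                      \<and> u = (\<Sum>d\<in>{d. c d \<noteq> 0}. c d))"

definition fin_gen :: "nat \<Rightarrow> ('k::field mpoly, 'm::ab_group_add) gmod \<Rightarrow> bool" where
  "fin_gen n M \<longleftrightarrow> (\<exists>U. finite U \<and> U \<subseteq> carr M \<and>
      carr M = {(\<Sum>u\<in>U. act M (c u) u) | c. \<forall>u\<in>U. c u \<in> polys_in n})"

text \<open>K_i(h,M): an element is a family (phi J) indexed by the i-subsets J of
  {0..<length h}, phi J being the coefficient of e_J; e_J has degree
  sum of deg h_j for j in J.\<close>
definition wdeg :: "'k::zero mpoly list \<Rightarrow> nat set \<Rightarrow> int" where
  "wdeg h J = int (\<Sum>j\<in>J. hdeg (h ! j))"

definition kcarr :: "'k::zero mpoly list \<Rightarrow> ('k mpoly, 'm::zero) gmod \<Rightarrow> nat \<Rightarrow> (nat set \<Rightarrow> 'm) set" where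
  "kcarr h M i = {\<phi>. (\<forall>J. \<phi> J \<in> carr M) \<and>
                     (\<forall>J. \<phi> J \<noteq> 0 \<longrightarrow> J \<subseteq> {..<length h} \<and> card J = i)}"

definition kcomp :: "'k::zero mpoly list \<Rightarrow> ('k mpoly, 'm::zero) gmod \<Rightarrow> nat \<Rightarrow> int \<Rightarrow> (nat set \<Rightarrow> 'm) set" where
  "kcomp h M i d = {\<phi>\<in>kcarr h M i. \<forall>J. \<phi> J \<in> comp M (d - wdeg h J)}"

definition kact :: "('k mpoly, 'm) gmod \<Rightarrow> 'k mpoly \<Rightarrow> (nat set \<Rightarrow> 'm) \<Rightarrow> (nat set \<Rightarrow> 'm)" where
  "kact M p \<phi> = (\<lambda>J. act M p (\<phi> J))"

text \<open>Koszul differential: e_{j_1} ^ ... ^ e_{j_i} |-> sum_k (-1)^(k+1) h_{j_k} e_{J - j_k}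
  (j_1 < ... < j_i).  In coordinates: the coefficient of e_J in d(phi).\<close>
definition kdiff :: "'k mpoly list \<Rightarrow> ('k mpoly, 'm::ab_group_add) gmod \<Rightarrow> (nat set \<Rightarrow> 'm) \<Rightarrow> (nat set \<Rightarrow> 'm)" where
  "kdiff h M \<phi> = (\<lambda>J. \<Sum>j\<in>{..<length h} - J.
      (if even (card {l\<in>J. l < j}) then act M (h ! j) (\<phi> (insert j J))
       else - act M (h ! j) (\<phi> (insert j J))))"

definition koszul :: "'k::zero mpoly list \<Rightarrow> ('k mpoly, 'm::zero) gmod \<Rightarrow> nat \<Rightarrow> ('k mpoly, nat set \<Rightarrow> 'm) gmod" where
  "koszul h M i = \<lparr>carr = kcarr h M i, act = kact M, comp = kcomp h M i\<rparr>"

definition cycles :: "'k::zero mpoly list \<Rightarrow> ('k mpoly, 'm::ab_group_add) gmod \<Rightarrow> nat \<Rightarrow> ('k mpoly, nat set \<Rightarrow> 'm) gmod" where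
  "cycles h M i = \<lparr>carr = {\<phi>\<in>kcarr h M i. kdiff h M \<phi> = 0}, act = kact M,
                  comp = (\<lambda>d. {\<phi>\<in>kcomp h M i d. kdiff h M \<phi> = 0})\<rparr>"

definition vars :: "nat \<Rightarrow> 'k::{zero,one} mpoly list" where
  "vars n = map var [0..<n]"

text \<open>Tor_i^S(N,K)_j = H_i(x_1..x_n; N)_j is nonzero.\<close>
definition tor_nz :: "nat \<Rightarrow> ('k::field mpoly, 'm::ab_group_add) gmod \<Rightarrow> nat \<Rightarrow> int \<Rightarrow> bool" where
  "tor_nz n N i j \<longleftrightarrow> (\<exists>\<phi>\<in>kcomp (vars n) N i j. kdiff (vars n) N \<phi> = 0 \<and>
                          \<phi> \<notin> kdiff (vars n) N ` kcarr (vars n) N (Suc i))"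

text \<open>reg N = sup { j - i : beta_{ij}(N) \<noteq> 0 }, which is -\<infinity> for N = 0.\<close>
definition reg :: "nat \<Rightarrow> ('k::field mpoly, 'm::ab_group_add) gmod \<Rightarrow> ereal" where
  "reg n N = Sup {ereal (of_int (j - int i)) | i j. tor_nz n N i j}"

end

theory Submission
  imports Defs
begin

text \<open>Let \<open>h = \<Sum>\<^sub>l c\<^sub>l f\<^sub>l\<close> lie in the ideal \<open>(f)\<close>. In the Koszul complex \<open>K(f,h;M)\<close> replace the
  last basis vector \<open>e\<^sub>m\<close> by \<open>e\<^sub>m - \<Sum>\<^sub>l c\<^sub>l e\<^sub>l\<close>, which is a cycle of degree one. This splits
  \<open>K(f,h;M)\<close> as \<open>K(f;M) \<oplus> K(f;M)[-1]\<close>, so \<open>Z\<^sub>i(f;M)\<close> is an \<open>S\<close>-module retract of \<open>Z\<^sub>i(f,h;M)\<close>.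
  A retraction induces an injection on \<open>Tor\<^sup>S(-,K)\<close>, computed by the Koszul complex on the
  variables, so every nonzero Betti number of \<open>Z\<^sub>i(f;M)\<close> is one of \<open>Z\<^sub>i(f,h;M)\<close> and the
  regularity can only grow. Adding the \<open>g\<^sub>k\<close> one at a time gives the theorem.\<close>

lemma polys_in_zero: "0 \<in> polys_in n"
  by (simp add: polys_in_def)

lemma polys_in_add:
  assumes "p \<in> polys_in n" "q \<in> polys_in n"
  shows "p + q \<in> polys_in n"
  unfolding polys_in_def mem_Collect_eq
proof
  fix m assume "m \<in> Poly_Mapping.keys (p + q)"
  then have "m \<in> Poly_Mapping.keys p \<union> Poly_Mapping.keys q"
    using keys_add by (rule subsetD[rotated])
  with assms show "Poly_Mapping.keys m \<subseteq> {..<n}"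
    unfolding polys_in_def by auto
qed

lemma polys_in_mult:
  assumes "p \<in> polys_in n" "q \<in> polys_in n"
  shows "p * q \<in> polys_in n"
  unfolding polys_in_def mem_Collect_eq
proof
  fix m assume "m \<in> Poly_Mapping.keys (p * q)"
  then have "m \<in> {a + b | a b. a \<in> Poly_Mapping.keys p \<and> b \<in> Poly_Mapping.keys q}"
    using keys_mult by (rule subsetD[rotated])
  then obtain a b where ab: "m = a + b" "a \<in> Poly_Mapping.keys p" "b \<in> Poly_Mapping.keys q"
    by blast
  with assms have "Poly_Mapping.keys a \<union> Poly_Mapping.keys b \<subseteq> {..<n}"
    unfolding polys_in_def by blast
  then show "Poly_Mapping.keys m \<subseteq> {..<n}"
    unfolding ab(1) using keys_add by (rule order_trans[rotated])
qed

lemma polys_in_sum: "(\<And>x. x \<in> A \<Longrightarrow> F x \<in> polys_in n) \<Longrightarrow> sum F A \<in> polys_in n"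
  by (induction A rule: infinite_finite_induct) (auto simp: polys_in_zero polys_in_add)

lemma var_in_polys_in: "k < n \<Longrightarrow> (var k :: 'k::zero_neq_one mpoly) \<in> polys_in n"
  by (simp add: polys_in_def var_def)

lemma in_ideal_mono:
  assumes "in_ideal n A p" "A \<subseteq> B" "finite B"
  shows "in_ideal n B p"
proof -
  obtain c where c: "\<forall>q\<in>A. c q \<in> polys_in n" "p = (\<Sum>q\<in>A. c q * q)"
    using assms(1) unfolding in_ideal_def by blast
  define c' where "c' q = (if q \<in> A then c q else 0)" for q
  have "(\<Sum>q\<in>B. c' q * q) = (\<Sum>q\<in>A. c q * q)"
    by (rule sum.mono_neutral_cong_right) (use assms(2,3) in \<open>auto simp: c'_def\<close>)
  moreover have "\<forall>q\<in>B. c' q \<in> polys_in n"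
    using c(1) by (auto simp: c'_def polys_in_zero)
  ultimately show ?thesis
    unfolding in_ideal_def using c(2) by auto
qed

lemma in_ideal_set_nth_coeffs:
  assumes "in_ideal n (set f) h"
  shows "\<exists>c. (\<forall>l. c l \<in> polys_in n) \<and> h = (\<Sum>l<length f. c l * f ! l)"
  using assms
proof (induction f arbitrary: h)
  case Nil
  then show ?case
    by (auto simp: in_ideal_def intro!: exI[of _ "\<lambda>_. 0"] polys_in_zero)
next
  case (Cons a f)
  from Cons.prems obtain c where c: "\<forall>q\<in>set (a # f). c q \<in> polys_in n"
      "h = (\<Sum>q\<in>set (a # f). c q * q)"
    unfolding in_ideal_def by blast
  obtain c0 h' where h: "h = c0 * a + h'" and c0: "c0 \<in> polys_in n" and h': "in_ideal n (set f) h'"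
  proof (cases "a \<in> set f")
    case True
    then show ?thesis
      using that[of 0 h] Cons.prems by (simp add: insert_absorb polys_in_zero)
  next
    case False
    then show ?thesis
      using that[of "c a" "\<Sum>q\<in>set f. c q * q"] c unfolding in_ideal_def by auto
  qed
  obtain c' where c': "\<forall>l. c' l \<in> polys_in n" "h' = (\<Sum>l<length f. c' l * f ! l)"
    using Cons.IH[OF h'] by blast
  have "(\<Sum>l<length (a # f). (if l = 0 then c0 else c' (l - 1)) * (a # f) ! l) = c0 * a + h'"
    by (simp only: length_Cons sum.lessThan_Suc_shift) (simp add: c')
  then show ?case
    using c0 c' h by (intro exI[of _ "\<lambda>l. if l = 0 then c0 else c' (l - 1)"]) auto
qed

definition neg_pow :: "nat \<Rightarrow> 'a::ab_group_add \<Rightarrow> 'a" where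
  "neg_pow e x = (if even e then x else - x)"

lemma neg_pow_add_exp: "neg_pow (a + b) x = neg_pow a (neg_pow b x)"
  by (auto simp: neg_pow_def)

lemma neg_pow_Suc: "neg_pow (Suc e) x = - neg_pow e x"
  by (simp add: neg_pow_def)

lemma neg_pow_add: "neg_pow e (x + y) = neg_pow e x + neg_pow e y"
  by (auto simp: neg_pow_def)

lemma neg_pow_uminus: "neg_pow e (- x) = - neg_pow e x"
  by (auto simp: neg_pow_def)

lemma neg_pow_zero [simp]: "neg_pow e 0 = 0"
  by (auto simp: neg_pow_def)

lemma neg_pow_sum: "neg_pow e (sum F A) = (\<Sum>x\<in>A. neg_pow e (F x))"
  by (auto simp: neg_pow_def sum_negf)

lemma neg_pow_cong_even: "even (a + b) \<Longrightarrow> neg_pow a x = neg_pow b x"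
  by (auto simp: neg_pow_def)

abbreviation count_below :: "nat set \<Rightarrow> nat \<Rightarrow> nat" where
  "count_below J j \<equiv> card {l\<in>J. l < j}"

abbreviation count_above :: "nat set \<Rightarrow> nat \<Rightarrow> nat" where
  "count_above J j \<equiv> card {l\<in>J. j < l}"

lemma count_below_plus_above:
  assumes "finite J" "j \<notin> J"
  shows "count_below J j + count_above J j = card J"
proof -
  have "J = {l\<in>J. l < j} \<union> {l\<in>J. j < l}"
    using assms(2) by auto (metis linorder_neqE_nat)
  then show ?thesis
    using assms(1) card_Un_disjoint[of "{l\<in>J. l < j}" "{l\<in>J. j < l}"]
    by (metis (no_types, lifting) finite_Un disjoint_iff less_asym mem_Collect_eq)
qed

lemma count_below_remove:
  assumes "finite J" "l \<in> J" "l \<noteq> j"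
  shows "count_below J j = count_below (J - {l}) j + (if l < j then 1 else 0)"
proof (cases "l < j")
  case True
  then have "{x\<in>J. x < j} = insert l {x\<in>J - {l}. x < j}"
    using assms(2) by auto
  with assms(1) True show ?thesis
    by simp
qed (use assms in \<open>auto intro!: arg_cong[where f = card]\<close>)

lemma count_above_insert:
  assumes "finite J" "j \<notin> J"
  shows "count_above (insert j J) l = count_above J l + (if l < j then 1 else 0)"
proof (cases "l < j")
  case True
  then have "{k\<in>insert j J. l < k} = insert j {k\<in>J. l < k}"
    by auto
  with assms True show ?thesis
    by simp
qed (auto intro!: arg_cong[where f = card])

locale gmodule =
  fixes n :: nat and M :: "('k::field mpoly, 'm::ab_group_add) gmod"
  assumes graded: "graded_module n M"
begin

lemma carr_subgrp: "subgrp (carr M)"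
  using graded unfolding graded_module_def by blast

lemma carr_zero: "0 \<in> carr M"
  using carr_subgrp unfolding subgrp_def by blast

lemma carr_add: "u \<in> carr M \<Longrightarrow> v \<in> carr M \<Longrightarrow> u + v \<in> carr M"
  using carr_subgrp unfolding subgrp_def by blast

lemma carr_uminus: "u \<in> carr M \<Longrightarrow> - u \<in> carr M"
  using carr_subgrp unfolding subgrp_def by blast

lemma carr_neg_pow: "u \<in> carr M \<Longrightarrow> neg_pow e u \<in> carr M"
  using carr_uminus by (simp add: neg_pow_def)

lemma carr_sum: "(\<And>x. x \<in> A \<Longrightarrow> F x \<in> carr M) \<Longrightarrow> sum F A \<in> carr M"
  by (induction A rule: infinite_finite_induct) (auto simp: carr_zero carr_add)

lemma comp_zero: "0 \<in> comp M d"
  using graded unfolding graded_module_def subgrp_def by blast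

lemma carr_act: "p \<in> polys_in n \<Longrightarrow> u \<in> carr M \<Longrightarrow> act M p u \<in> carr M"
  using graded unfolding graded_module_def by blast

lemma act_add_left:
  "p \<in> polys_in n \<Longrightarrow> q \<in> polys_in n \<Longrightarrow> u \<in> carr M \<Longrightarrow> act M (p + q) u = act M p u + act M q u"
  using graded unfolding graded_module_def by blast

lemma act_mult:
  "p \<in> polys_in n \<Longrightarrow> q \<in> polys_in n \<Longrightarrow> u \<in> carr M \<Longrightarrow> act M (p * q) u = act M p (act M q u)"
  using graded unfolding graded_module_def by blast

lemma act_add_right:
  "p \<in> polys_in n \<Longrightarrow> u \<in> carr M \<Longrightarrow> v \<in> carr M \<Longrightarrow> act M p (u + v) = act M p u + act M p v"
  using graded unfolding graded_module_def by blast

lemma act_zero_right: "p \<in> polys_in n \<Longrightarrow> act M p 0 = 0"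
  using act_add_right[of p 0 0] carr_zero by simp

lemma act_zero_left: "u \<in> carr M \<Longrightarrow> act M 0 u = 0"
  using act_add_left[of 0 0 u] polys_in_zero[of n] by simp

lemma act_uminus_right: "p \<in> polys_in n \<Longrightarrow> u \<in> carr M \<Longrightarrow> act M p (- u) = - act M p u"
  using act_add_right[of p u "- u"] carr_uminus act_zero_right
  by (simp add: eq_neg_iff_add_eq_0 add.commute)

lemma act_neg_pow_right:
  "p \<in> polys_in n \<Longrightarrow> u \<in> carr M \<Longrightarrow> act M p (neg_pow e u) = neg_pow e (act M p u)"
  by (simp add: neg_pow_def act_uminus_right)

lemma act_sum_right:
  "p \<in> polys_in n \<Longrightarrow> (\<And>x. x \<in> A \<Longrightarrow> F x \<in> carr M) \<Longrightarrow> act M p (sum F A) = (\<Sum>x\<in>A. act M p (F x))"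
  by (induction A rule: infinite_finite_induct) (auto simp: act_zero_right act_add_right carr_sum)

lemma act_sum_left:
  "(\<And>x. x \<in> A \<Longrightarrow> F x \<in> polys_in n) \<Longrightarrow> u \<in> carr M \<Longrightarrow> act M (sum F A) u = (\<Sum>x\<in>A. act M (F x) u)"
  by (induction A rule: infinite_finite_induct) (auto simp: act_zero_left act_add_left polys_in_sum)

lemma act_commute:
  "p \<in> polys_in n \<Longrightarrow> q \<in> polys_in n \<Longrightarrow> u \<in> carr M \<Longrightarrow> act M p (act M q u) = act M q (act M p u)"
  by (metis act_mult mult.commute)

lemma act_neg_pow_swap:
  assumes "p \<in> polys_in n" "q \<in> polys_in n" "w \<in> carr M" "finite J" "l \<in> J" "j \<notin> J"
  shows "neg_pow (count_below J j) (act M p (neg_pow (count_above (insert j J) l) (act M q w))) =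
    neg_pow (count_above J l) (act M q (neg_pow (count_below (J - {l}) j) (act M p w)))"
proof -
  have "l \<noteq> j"
    using assms(5,6) by blast
  then have "even (count_below J j + count_above (insert j J) l + (count_above J l + count_below (J - {l}) j))"
    using count_below_remove[OF assms(4,5)] count_above_insert[OF assms(4,6)] by auto
  then have "neg_pow (count_below J j + count_above (insert j J) l) (act M q (act M p w)) =
      neg_pow (count_above J l + count_below (J - {l}) j) (act M q (act M p w))"
    by (rule neg_pow_cong_even)
  then show ?thesis
    using assms(1-3) by (simp add: neg_pow_add_exp act_neg_pow_right carr_act act_commute)
qed

end

section \<open>Koszul complexes\<close>

lemma kdiff_neg_pow:
  "kdiff hs N \<phi> J = (\<Sum>j\<in>{..<length hs} - J. neg_pow (count_below J j) (act N (hs ! j) (\<phi> (insert j J))))"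
  by (simp add: kdiff_def neg_pow_def)

lemma kdiff_map:
  fixes r :: "'m::ab_group_add \<Rightarrow> 'm"
  assumes V_zero: "0 \<in> V" and V_add: "\<And>u v. u \<in> V \<Longrightarrow> v \<in> V \<Longrightarrow> u + v \<in> V"
    and V_uminus: "\<And>u. u \<in> V \<Longrightarrow> - u \<in> V"
    and V_act: "\<And>j u. j < length hs \<Longrightarrow> u \<in> V \<Longrightarrow> act N (hs ! j) u \<in> V"
    and r_add: "\<And>u v. u \<in> V \<Longrightarrow> v \<in> V \<Longrightarrow> r (u + v) = r u + r v"
    and r_act: "\<And>j u. j < length hs \<Longrightarrow> u \<in> V \<Longrightarrow> r (act N (hs ! j) u) = act N (hs ! j) (r u)"
    and \<psi>: "\<And>J. \<psi> J \<in> V"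
  shows "kdiff hs N (\<lambda>J. r (\<psi> J)) = (\<lambda>J. r (kdiff hs N \<psi> J))"
proof
  fix J
  have r_uminus: "r (- u) = - r u" if "u \<in> V" for u
    using r_add[OF V_uminus[OF that] that] r_add[OF V_zero V_zero] by (simp add: eq_neg_iff_add_eq_0)
  have V_sum: "sum F A \<in> V" if "\<And>x. x \<in> A \<Longrightarrow> F x \<in> V" for A :: "nat set" and F
    using that by (induction A rule: infinite_finite_induct) (auto simp: V_zero V_add)
  have r_sum: "r (sum F A) = (\<Sum>x\<in>A. r (F x))" if "\<And>x. x \<in> A \<Longrightarrow> F x \<in> V" for A :: "nat set" and F
    using that
  proof (induction A rule: infinite_finite_induct)
    case (insert x A)
    then show ?case by (simp add: r_add V_sum)
  qed (use r_add[OF V_zero V_zero] in auto)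
  have "kdiff hs N (\<lambda>J. r (\<psi> J)) J =
      (\<Sum>j\<in>{..<length hs} - J. r (neg_pow (count_below J j) (act N (hs ! j) (\<psi> (insert j J)))))"
    unfolding kdiff_neg_pow by (rule sum.cong) (simp_all add: neg_pow_def r_act r_uminus V_act \<psi>)
  also have "\<dots> = r (kdiff hs N \<psi> J)"
    unfolding kdiff_neg_pow by (intro r_sum[symmetric]) (use V_act V_uminus \<psi> in \<open>force simp: neg_pow_def\<close>)
  finally show "kdiff hs N (\<lambda>J. r (\<psi> J)) J = r (kdiff hs N \<psi> J)" .
qed

text \<open>The preimage under the differential need not be homogeneous, so a retraction which is merely
  an additive map commuting with the variables suffices.\<close>
lemma tor_nz_retract:
  fixes N N' :: "('k::field mpoly, 'm::ab_group_add) gmod"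
  assumes carr_sub: "carr N \<subseteq> carr N'" and comp_sub: "\<And>d. comp N d \<subseteq> comp N' d"
    and act_eq: "act N' = act N"
    and V: "carr N' \<subseteq> V" "0 \<in> V" "\<And>u v. u \<in> V \<Longrightarrow> v \<in> V \<Longrightarrow> u + v \<in> V"
      "\<And>u. u \<in> V \<Longrightarrow> - u \<in> V" "\<And>k u. k < n \<Longrightarrow> u \<in> V \<Longrightarrow> act N (var k) u \<in> V"
    and r_add: "\<And>u v. u \<in> V \<Longrightarrow> v \<in> V \<Longrightarrow> r (u + v) = r u + r v"
    and r_act: "\<And>k u. k < n \<Longrightarrow> u \<in> V \<Longrightarrow> r (act N (var k) u) = act N (var k) (r u)"
    and r_carr: "\<And>u. u \<in> carr N' \<Longrightarrow> r u \<in> carr N"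
    and r_id: "\<And>u. u \<in> carr N \<Longrightarrow> r u = u"
    and "tor_nz n N a j"
  shows "tor_nz n N' a j"
proof -
  have kdiff_eq: "kdiff (vars n) N' = kdiff (vars n) N"
    unfolding kdiff_def act_eq ..
  from \<open>tor_nz n N a j\<close> obtain \<phi> where \<phi>: "\<phi> \<in> kcomp (vars n) N a j" "kdiff (vars n) N \<phi> = 0"
      "\<phi> \<notin> kdiff (vars n) N ` kcarr (vars n) N (Suc a)"
    unfolding tor_nz_def by blast
  have "\<phi> \<notin> kdiff (vars n) N' ` kcarr (vars n) N' (Suc a)"
  proof
    assume "\<phi> \<in> kdiff (vars n) N' ` kcarr (vars n) N' (Suc a)"
    then obtain \<psi> where \<psi>: "\<psi> \<in> kcarr (vars n) N' (Suc a)" "\<phi> = kdiff (vars n) N \<psi>"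
      unfolding kdiff_eq by blast
    have \<psi>_V: "\<psi> J \<in> V" for J
      using \<psi>(1) V(1) unfolding kcarr_def by blast
    have "r 0 = 0"
      using r_add[OF V(2) V(2)] by simp
    then have "(\<lambda>J. r (\<psi> J)) \<in> kcarr (vars n) N (Suc a)"
      using \<psi>(1) r_carr unfolding kcarr_def mem_Collect_eq by metis
    moreover have "kdiff (vars n) N (\<lambda>J. r (\<psi> J)) = \<phi>"
    proof -
      have "kdiff (vars n) N (\<lambda>J. r (\<psi> J)) = (\<lambda>J. r (\<phi> J))"
        unfolding \<psi>(2) by (rule kdiff_map[OF V(2-4) _ r_add]) (auto simp: vars_def V(5) r_act \<psi>_V)
      also have "\<dots> = \<phi>"
        using \<phi>(1) r_id unfolding kcomp_def kcarr_def by auto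
      finally show ?thesis .
    qed
    ultimately show False
      using \<phi>(3) by blast
  qed
  moreover have "\<phi> \<in> kcomp (vars n) N' a j"
    using \<phi>(1) carr_sub comp_sub unfolding kcomp_def kcarr_def by blast
  ultimately show ?thesis
    using \<phi>(2) kdiff_eq unfolding tor_nz_def by auto
qed

lemma reg_mono: "(\<And>a j. tor_nz n N a j \<Longrightarrow> tor_nz n N' a j) \<Longrightarrow> reg n N \<le> reg n N'"
  unfolding reg_def by (rule Sup_subset_mono) blast

lemma kdiff_snoc_mem:
  assumes "length f \<in> K"
  shows "kdiff (f @ [h]) M \<phi> K = kdiff f M \<phi> K"
proof -
  have "{..<length (f @ [h])} - K = {..<length f} - K"
    using assms by (auto simp: less_Suc_eq)
  then show ?thesis
    unfolding kdiff_def by (intro sum.cong) (simp_all add: nth_append)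
qed

lemma kdiff_snoc_not_mem:
  assumes "length f \<notin> K"
  shows "kdiff (f @ [h]) M \<phi> K =
    neg_pow (count_below K (length f)) (act M h (\<phi> (insert (length f) K))) + kdiff f M \<phi> K"
proof -
  have "{..<length (f @ [h])} - K = insert (length f) ({..<length f} - K)"
    using assms by auto
  moreover have "(\<Sum>j\<in>{..<length f} - K. neg_pow (count_below K j) (act M ((f @ [h]) ! j) (\<phi> (insert j K))))
      = (\<Sum>j\<in>{..<length f} - K. neg_pow (count_below K j) (act M (f ! j) (\<phi> (insert j K))))"
    by (intro sum.cong) (simp_all add: nth_append)
  ultimately show ?thesis
    using assms unfolding kdiff_def neg_pow_def[symmetric] by simp
qed

lemma kdiff_insert_remove:
  assumes J: "J \<subseteq> {..<length f}" and l: "l \<in> J"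
  shows "kdiff f M \<phi> (insert (length f) (J - {l})) =
    neg_pow (count_below (J - {l}) l) (act M (f ! l) (\<phi> (insert (length f) J))) +
    (\<Sum>j\<in>{..<length f} - J. neg_pow (count_below (J - {l}) j)
      (act M (f ! j) (\<phi> (insert (length f) (insert j (J - {l}))))))"
proof -
  let ?K = "insert (length f) (J - {l})"
  have below: "count_below ?K j = count_below (J - {l}) j" if "j < length f" for j
    using that by (metis (lifting) insert_iff less_irrefl mem_Collect_eq order.strict_trans)
  have D: "{..<length f} - ?K = insert l ({..<length f} - J)" and ins: "insert l ?K = insert (length f) J"
    using J l by auto
  have "l < length f" "l \<notin> {..<length f} - J"
    using J l by auto
  have terms: "neg_pow (count_below ?K j) (act M (f ! j) (\<phi> (insert j ?K))) =
      neg_pow (count_below (J - {l}) j) (act M (f ! j) (\<phi> (insert (length f) (insert j (J - {l})))))"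
    if "j \<in> {..<length f} - J" for j
  proof -
    from that have "j < length f"
      by simp
    then show ?thesis
      by (simp only: below insert_commute[of j "length f"])
  qed
  have "kdiff f M \<phi> ?K = neg_pow (count_below ?K l) (act M (f ! l) (\<phi> (insert l ?K))) +
      (\<Sum>j\<in>{..<length f} - J. neg_pow (count_below ?K j) (act M (f ! j) (\<phi> (insert j ?K))))"
    unfolding kdiff_neg_pow D using \<open>l \<notin> {..<length f} - J\<close> by (simp add: sum.insert del: insert_Diff_single)
  also have "\<dots> = neg_pow (count_below (J - {l}) l) (act M (f ! l) (\<phi> (insert (length f) J))) +
      (\<Sum>j\<in>{..<length f} - J. neg_pow (count_below (J - {l}) j)
        (act M (f ! j) (\<phi> (insert (length f) (insert j (J - {l}))))))"
    unfolding below[OF \<open>l < length f\<close>] ins using sum.cong[OF refl terms] by (rule arg_cong)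
  finally show ?thesis .
qed

context gmodule
begin

lemma kdiff_snoc_kcarr:
  assumes "h \<in> polys_in n" "\<phi> \<in> kcarr f M i"
  shows "kdiff (f @ [h]) M \<phi> = kdiff f M \<phi>"
proof
  fix K
  show "kdiff (f @ [h]) M \<phi> K = kdiff f M \<phi> K"
  proof (cases "length f \<in> K")
    case False
    have "\<phi> (insert (length f) K) = 0"
      using assms(2) unfolding kcarr_def by blast
    with False show ?thesis
      by (simp add: kdiff_snoc_not_mem act_zero_right[OF assms(1)])
  qed (rule kdiff_snoc_mem)
qed

lemma kcarr_snoc: "kcarr f M i \<subseteq> kcarr (f @ [h]) M i"
  by (force simp: kcarr_def lessThan_Suc)

lemma cycles_carr_snoc:
  "h \<in> polys_in n \<Longrightarrow> carr (cycles f M i) \<subseteq> carr (cycles (f @ [h]) M i)"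
  unfolding cycles_def using kcarr_snoc[THEN subsetD] kdiff_snoc_kcarr by auto

lemma cycles_comp_snoc:
  assumes h: "h \<in> polys_in n"
  shows "comp (cycles f M i) d \<subseteq> comp (cycles (f @ [h]) M i) d"
proof
  fix \<phi> assume "\<phi> \<in> comp (cycles f M i) d"
  then have \<phi>: "\<phi> \<in> kcarr f M i" "\<And>J. \<phi> J \<in> comp M (d - wdeg f J)" "kdiff f M \<phi> = 0"
    unfolding cycles_def kcomp_def by auto
  have "\<phi> J \<in> comp M (d - wdeg (f @ [h]) J)" for J
  proof (cases "\<phi> J = 0")
    case False
    then have "J \<subseteq> {..<length f}"
      using \<phi>(1) unfolding kcarr_def by auto
    then have "wdeg (f @ [h]) J = wdeg f J"
      unfolding wdeg_def by (intro arg_cong[where f = int] sum.cong) (auto simp: nth_append)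
    then show ?thesis
      using \<phi>(2) by simp
  qed (simp add: comp_zero)
  with \<phi> show "\<phi> \<in> comp (cycles (f @ [h]) M i) d"
    unfolding cycles_def kcomp_def using kcarr_snoc[THEN subsetD] kdiff_snoc_kcarr[OF h] by auto
qed

end

section \<open>A retraction of Koszul cycles\<close>

text \<open>If \<open>h = \<Sum>\<^sub>l c\<^sub>l f\<^sub>l\<close> with \<open>m = length f\<close>, then \<open>e'\<^sub>m = e\<^sub>m - \<Sum>\<^sub>l c\<^sub>l e\<^sub>l\<close> is a cycle of
  \<open>K(f,h;M)\<close>. Substituting \<open>e\<^sub>m = e'\<^sub>m + \<Sum>\<^sub>l c\<^sub>l e\<^sub>l\<close> and discarding the multiples of \<open>e'\<^sub>m\<close> gives
  the following coefficients in \<open>K(f;M)\<close>; the sign comes from moving \<open>e\<^sub>l\<close> into its position in \<open>e\<^sub>J\<close>.\<close>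
definition koszul_retract ::
  "('k mpoly, 'm::ab_group_add) gmod \<Rightarrow> nat \<Rightarrow> (nat \<Rightarrow> 'k mpoly) \<Rightarrow> (nat set \<Rightarrow> 'm) \<Rightarrow> nat set \<Rightarrow> 'm" where
  "koszul_retract M m c \<phi> = (\<lambda>J. if J \<subseteq> {..<m}
     then \<phi> J + (\<Sum>l\<in>J. neg_pow (count_above J l) (act M (c l) (\<phi> (insert m (J - {l})))))
     else 0)"

locale ideal_element = gmodule n M for n and M :: "('k::field mpoly, 'm::ab_group_add) gmod" +
  fixes f :: "'k mpoly list" and c :: "nat \<Rightarrow> 'k mpoly" and h :: "'k mpoly"
  assumes f_polys: "\<forall>p\<in>set f. p \<in> polys_in n"
    and c_polys: "c l \<in> polys_in n"
    and h_eq: "h = (\<Sum>l<length f. c l * f ! l)"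
begin

abbreviation retract :: "(nat set \<Rightarrow> 'm) \<Rightarrow> nat set \<Rightarrow> 'm" where
  "retract \<equiv> koszul_retract M (length f) c"

lemma nth_f_polys: "j < length f \<Longrightarrow> f ! j \<in> polys_in n"
  using f_polys by simp

lemma h_polys: "h \<in> polys_in n"
  unfolding h_eq by (intro polys_in_sum polys_in_mult c_polys nth_f_polys) simp

lemma retract_carr: "(\<And>J. \<phi> J \<in> carr M) \<Longrightarrow> retract \<phi> J \<in> carr M"
  unfolding koszul_retract_def
  by (auto intro!: carr_add carr_sum carr_neg_pow carr_act c_polys carr_zero)

lemma retract_add:
  assumes "\<And>J. u J \<in> carr M" "\<And>J. v J \<in> carr M"
  shows "retract (u + v) = retract u + retract v"
  unfolding koszul_retract_def using assms
  by (auto simp: act_add_right[OF c_polys] neg_pow_add sum.distrib)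

lemma retract_act:
  assumes p: "p \<in> polys_in n" and u: "\<And>J. u J \<in> carr M"
  shows "retract (kact M p u) = kact M p (retract u)"
proof
  fix J
  have terms: "neg_pow (count_above J l) (act M (c l) (u (insert (length f) (J - {l})))) \<in> carr M" for l
    by (intro carr_neg_pow carr_act c_polys u)
  have "act M p (\<Sum>l\<in>J. neg_pow (count_above J l) (act M (c l) (u (insert (length f) (J - {l}))))) =
      (\<Sum>l\<in>J. neg_pow (count_above J l) (act M (c l) (act M p (u (insert (length f) (J - {l}))))))"
    by (simp add: act_sum_right[OF p terms] act_neg_pow_right p carr_act c_polys u act_commute)
  then show "retract (kact M p u) J = kact M p (retract u) J"
    unfolding koszul_retract_def kact_def
    by (simp add: act_add_right[OF p u carr_sum[OF terms]] act_zero_right[OF p])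
qed

lemma retract_id:
  assumes "u \<in> kcarr f M i"
  shows "retract u = u"
proof
  fix J
  have zero: "u K = 0" if "\<not> K \<subseteq> {..<length f}" for K
    using assms that unfolding kcarr_def by blast
  show "retract u J = u J"
  proof (cases "J \<subseteq> {..<length f}")
    case True
    have "u (insert (length f) (J - {l})) = 0" for l
      by (rule zero) simp
    with True show ?thesis
      unfolding koszul_retract_def by (simp add: act_zero_right[OF c_polys])
  qed (simp add: koszul_retract_def zero)
qed

lemma retract_kcarr:
  assumes u: "u \<in> kcarr (f @ [h]) M i"
  shows "retract u \<in> kcarr f M i"
proof -
  have u_carr: "u J \<in> carr M" for J
    using u unfolding kcarr_def by blast
  have u_supp: "card J = i" if "u J \<noteq> 0" for J
    using u that unfolding kcarr_def by blast
  have "J \<subseteq> {..<length f} \<and> card J = i" if nz: "retract u J \<noteq> 0" for J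
  proof -
    have J: "J \<subseteq> {..<length f}"
      using nz unfolding koszul_retract_def by (auto split: if_splits)
    then have fin: "finite J"
      using finite_subset by blast
    have "card J = i"
    proof (rule ccontr)
      assume ne: "card J \<noteq> i"
      have "u (insert (length f) (J - {l})) = 0" if l: "l \<in> J" for l
      proof -
        have "length f \<notin> J - {l}"
          using J by auto
        then have "card (insert (length f) (J - {l})) = card J"
          using fin l by (simp add: card_Diff_singleton) (metis card_gt_0_iff empty_iff Suc_pred)
        then show ?thesis
          using u_supp ne by metis
      qed
      moreover have "u J = 0"
        using u_supp ne by blast
      ultimately have "retract u J = 0"
        using J unfolding koszul_retract_def by (simp add: act_zero_right[OF c_polys])
      with nz show False ..
    qed
    with J show ?thesis ..
  qed
  then show ?thesis
    unfolding kcarr_def using retract_carr u_carr by blast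
qed

lemma retract_insert:
  assumes J: "J \<subseteq> {..<length f}" and j: "j \<in> {..<length f} - J"
  shows "retract \<phi> (insert j J) = \<phi> (insert j J) +
     neg_pow (count_above J j) (act M (c j) (\<phi> (insert (length f) J))) +
     (\<Sum>l\<in>J. neg_pow (count_above (insert j J) l) (act M (c l) (\<phi> (insert (length f) (insert j (J - {l}))))))"
proof -
  have fin: "finite J"
    using J finite_subset by blast
  have jJ: "j \<notin> J"
    using j by blast
  have "(\<Sum>l\<in>insert j J. neg_pow (count_above (insert j J) l) (act M (c l) (\<phi> (insert (length f) (insert j J - {l}))))) =
     neg_pow (count_above J j) (act M (c j) (\<phi> (insert (length f) J))) +
     (\<Sum>l\<in>J. neg_pow (count_above (insert j J) l) (act M (c l) (\<phi> (insert (length f) (insert j (J - {l}))))))"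
  proof -
    have "{k\<in>insert j J. j < k} = {k\<in>J. j < k}" "insert j J - {j} = J"
      using jJ by auto
    moreover have "insert j J - {l} = insert j (J - {l})" if "l \<in> J" for l
      using that jJ by auto
    ultimately show ?thesis
      using fin jJ by (simp cong: sum.cong)
  qed
  moreover have "insert j J \<subseteq> {..<length f}"
    using J j by blast
  ultimately show ?thesis
    unfolding koszul_retract_def by (simp add: add.assoc)
qed

context
  fixes \<phi> :: "nat set \<Rightarrow> 'm"
  assumes \<phi>_carr: "\<And>J. \<phi> J \<in> carr M"
begin

lemma kdiff_retract_term:
  assumes J: "J \<subseteq> {..<length f}" and j: "j \<in> {..<length f} - J"
  shows "neg_pow (count_below J j) (act M (f ! j) (retract \<phi> (insert j J))) =
    neg_pow (count_below J j) (act M (f ! j) (\<phi> (insert j J))) +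
    neg_pow (card J) (act M (c j * f ! j) (\<phi> (insert (length f) J))) +
    (\<Sum>l\<in>J. neg_pow (count_above J l) (act M (c l)
      (neg_pow (count_below (J - {l}) j) (act M (f ! j) (\<phi> (insert (length f) (insert j (J - {l}))))))))"
proof -
  define u where "u = \<phi> (insert (length f) J)"
  define W where "W l = \<phi> (insert (length f) (insert j (J - {l})))" for l
  have fin: "finite J" and jJ: "j \<notin> J" and fj: "f ! j \<in> polys_in n"
    using J j finite_subset nth_f_polys by auto
  have carrs: "u \<in> carr M" "W l \<in> carr M"
    "neg_pow (count_above (insert j J) l) (act M (c l) (W l)) \<in> carr M" for l
    unfolding u_def W_def by (auto intro!: carr_neg_pow carr_act c_polys \<phi>_carr)
  have "neg_pow (count_below J j) (act M (f ! j) (neg_pow (count_above J j) (act M (c j) u))) =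
      neg_pow (count_below J j + count_above J j) (act M (c j * f ! j) u)"
    using carrs fj by (simp add: neg_pow_add_exp act_neg_pow_right carr_act c_polys act_commute act_mult)
  also have "count_below J j + count_above J j = card J"
    by (rule count_below_plus_above[OF fin jJ])
  finally have B: "neg_pow (count_below J j) (act M (f ! j) (neg_pow (count_above J j) (act M (c j) u))) =
      neg_pow (card J) (act M (c j * f ! j) u)" .
  have Y: "neg_pow (count_below J j) (act M (f ! j) (\<Sum>l\<in>J. neg_pow (count_above (insert j J) l) (act M (c l) (W l)))) =
      (\<Sum>l\<in>J. neg_pow (count_above J l) (act M (c l) (neg_pow (count_below (J - {l}) j) (act M (f ! j) (W l)))))"
    unfolding act_sum_right[OF fj carrs(3)] neg_pow_sum
    by (rule sum.cong[OF refl], rule act_neg_pow_swap) (use fj carrs fin jJ c_polys in auto)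
  show ?thesis
    using retract_insert[OF J j] B Y carrs fj
    by (simp add: u_def W_def act_add_right carr_add carr_sum carr_neg_pow carr_act c_polys \<phi>_carr neg_pow_add)
qed

lemma kdiff_retract_eq:
  assumes J: "J \<subseteq> {..<length f}"
  shows "kdiff f M (retract \<phi>) J = kdiff f M \<phi> J +
    (\<Sum>j\<in>{..<length f} - J. neg_pow (card J) (act M (c j * f ! j) (\<phi> (insert (length f) J)))) +
    (\<Sum>l\<in>J. \<Sum>j\<in>{..<length f} - J. neg_pow (count_above J l) (act M (c l)
      (neg_pow (count_below (J - {l}) j) (act M (f ! j) (\<phi> (insert (length f) (insert j (J - {l}))))))))"
proof -
  have "kdiff f M (retract \<phi>) J = (\<Sum>j\<in>{..<length f} - J.
      neg_pow (count_below J j) (act M (f ! j) (\<phi> (insert j J))) +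
      neg_pow (card J) (act M (c j * f ! j) (\<phi> (insert (length f) J))) +
      (\<Sum>l\<in>J. neg_pow (count_above J l) (act M (c l)
        (neg_pow (count_below (J - {l}) j) (act M (f ! j) (\<phi> (insert (length f) (insert j (J - {l})))))))))"
    unfolding kdiff_neg_pow by (rule sum.cong[OF refl]) (rule kdiff_retract_term[OF J])
  then show ?thesis
    unfolding sum.distrib kdiff_neg_pow by (simp only: sum.swap[of _ "{..<length f} - J"])
qed

context
  assumes \<phi>_cycle: "kdiff (f @ [h]) M \<phi> = 0"
begin

lemma cycle_at_not_mem:
  assumes "J \<subseteq> {..<length f}"
  shows "kdiff f M \<phi> J = - neg_pow (card J) (act M h (\<phi> (insert (length f) J)))"
proof -
  have "length f \<notin> J" "{l\<in>J. l < length f} = J"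
    using assms by auto
  then have "neg_pow (card J) (act M h (\<phi> (insert (length f) J))) + kdiff f M \<phi> J = 0"
    using kdiff_snoc_not_mem[of f J h M \<phi>] fun_cong[OF \<phi>_cycle, of J] by simp
  then show ?thesis
    by (simp add: eq_neg_iff_add_eq_0 add.commute)
qed

lemma cycle_at_remove:
  assumes J: "J \<subseteq> {..<length f}" and l: "l \<in> J"
  shows "(\<Sum>j\<in>{..<length f} - J. neg_pow (count_below (J - {l}) j)
      (act M (f ! j) (\<phi> (insert (length f) (insert j (J - {l})))))) =
    - neg_pow (count_below (J - {l}) l) (act M (f ! l) (\<phi> (insert (length f) J)))"
proof -
  have "kdiff f M \<phi> (insert (length f) (J - {l})) = 0"
    using kdiff_snoc_mem[of f _ h M \<phi>] \<phi>_cycle by simp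
  then show ?thesis
    unfolding kdiff_insert_remove[OF J l] by (simp add: eq_neg_iff_add_eq_0 add.commute)
qed

lemma cycle_term_collapse:
  assumes J: "J \<subseteq> {..<length f}" and l: "l \<in> J"
  shows "(\<Sum>j\<in>{..<length f} - J. neg_pow (count_above J l) (act M (c l)
      (neg_pow (count_below (J - {l}) j) (act M (f ! j) (\<phi> (insert (length f) (insert j (J - {l})))))))) =
    neg_pow (card J) (act M (c l * f ! l) (\<phi> (insert (length f) J)))"
proof -
  define u where "u = \<phi> (insert (length f) J)"
  have fin: "finite J" and fl: "f ! l \<in> polys_in n"
    using J l finite_subset nth_f_polys by auto
  have terms: "neg_pow (count_below (J - {l}) j) (act M (f ! j) (\<phi> (insert (length f) (insert j (J - {l}))))) \<in> carr M"
    if "j \<in> {..<length f} - J" for j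
    using that by (auto intro!: carr_neg_pow carr_act nth_f_polys \<phi>_carr)
  have "{k\<in>J - {l}. l < k} = {k\<in>J. l < k}"
    by auto
  then have "count_below (J - {l}) l + count_above J l = card (J - {l})"
    using count_below_plus_above[of "J - {l}" l] fin by simp
  then have card_J: "card J = Suc (count_above J l + count_below (J - {l}) l)"
    using card_Suc_Diff1[OF fin l] by simp
  have "(\<Sum>j\<in>{..<length f} - J. neg_pow (count_above J l) (act M (c l)
      (neg_pow (count_below (J - {l}) j) (act M (f ! j) (\<phi> (insert (length f) (insert j (J - {l})))))))) =
    neg_pow (count_above J l) (act M (c l) (\<Sum>j\<in>{..<length f} - J. neg_pow (count_below (J - {l}) j)
      (act M (f ! j) (\<phi> (insert (length f) (insert j (J - {l})))))))"
    by (simp only: act_sum_right[OF c_polys terms] neg_pow_sum)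
  also have "\<dots> = neg_pow (count_above J l) (act M (c l) (- neg_pow (count_below (J - {l}) l) (act M (f ! l) u)))"
    unfolding u_def cycle_at_remove[OF J l] ..
  also have "\<dots> = neg_pow (card J) (act M (c l * f ! l) u)"
    unfolding card_J using fl \<phi>_carr
    by (simp add: u_def neg_pow_Suc neg_pow_add_exp neg_pow_uminus act_uminus_right act_neg_pow_right carr_neg_pow carr_act c_polys act_mult)
  finally show ?thesis
    unfolding u_def .
qed

lemma kdiff_retract: "kdiff f M (retract \<phi>) = 0"
proof
  fix J
  show "kdiff f M (retract \<phi>) J = 0 J"
  proof (cases "J \<subseteq> {..<length f}")
    case False
    then have "retract \<phi> (insert j J) = 0" for j
      unfolding koszul_retract_def by auto
    then show ?thesis
      unfolding kdiff_neg_pow by (simp add: act_zero_right nth_f_polys)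
  next
    case True
    define u where "u = \<phi> (insert (length f) J)"
    have "kdiff f M (retract \<phi>) J = kdiff f M \<phi> J +
        ((\<Sum>j\<in>{..<length f} - J. neg_pow (card J) (act M (c j * f ! j) u)) +
         (\<Sum>j\<in>J. neg_pow (card J) (act M (c j * f ! j) u)))"
      unfolding kdiff_retract_eq[OF True] u_def
      by (simp only: add.assoc sum.cong[OF refl cycle_term_collapse[OF True]])
    also have "\<dots> = kdiff f M \<phi> J + (\<Sum>j<length f. neg_pow (card J) (act M (c j * f ! j) u))"
      using True finite_subset[OF True]
      by (subst sum.union_disjoint[symmetric]) (auto simp: Un_absorb2)
    also have "\<dots> = kdiff f M \<phi> J + neg_pow (card J) (act M h u)"
    proof -
      have "act M (\<Sum>j<length f. c j * f ! j) u = (\<Sum>j<length f. act M (c j * f ! j) u)"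
        by (rule act_sum_left) (simp_all add: u_def polys_in_mult c_polys nth_f_polys \<phi>_carr)
      then show ?thesis
        unfolding h_eq by (simp add: neg_pow_sum)
    qed
    also have "\<dots> = 0"
      unfolding cycle_at_not_mem[OF True] u_def by simp
    finally show ?thesis
      by simp
  qed
qed

end

end

lemma retract_cycles:
  assumes "u \<in> carr (cycles (f @ [h]) M i)"
  shows "retract u \<in> carr (cycles f M i)"
proof -
  have u: "u \<in> kcarr (f @ [h]) M i" "kdiff (f @ [h]) M u = 0"
    using assms unfolding cycles_def by auto
  then have "\<And>J. u J \<in> carr M"
    unfolding kcarr_def by blast
  with u show ?thesis
    unfolding cycles_def using retract_kcarr kdiff_retract by simp
qed

lemma reg_cycles_le_snoc: "reg n (cycles f M i) \<le> reg n (cycles (f @ [h]) M i)"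
proof (rule reg_mono, rule tor_nz_retract)
  let ?V = "{\<phi>. \<forall>J. \<phi> J \<in> carr M}"
  show "carr (cycles f M i) \<subseteq> carr (cycles (f @ [h]) M i)"
    by (rule cycles_carr_snoc[OF h_polys])
  show "comp (cycles f M i) d \<subseteq> comp (cycles (f @ [h]) M i) d" for d
    by (rule cycles_comp_snoc[OF h_polys])
  show "act (cycles (f @ [h]) M i) = act (cycles f M i)"
    by (simp add: cycles_def)
  show "carr (cycles (f @ [h]) M i) \<subseteq> ?V" "0 \<in> ?V"
    "\<And>u v. u \<in> ?V \<Longrightarrow> v \<in> ?V \<Longrightarrow> u + v \<in> ?V" "\<And>u. u \<in> ?V \<Longrightarrow> - u \<in> ?V"
    "\<And>k u. k < n \<Longrightarrow> u \<in> ?V \<Longrightarrow> act (cycles f M i) (var k) u \<in> ?V"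
    by (auto simp: cycles_def kcarr_def kact_def carr_zero carr_add carr_uminus carr_act var_in_polys_in)
  show "\<And>u v. u \<in> ?V \<Longrightarrow> v \<in> ?V \<Longrightarrow> retract (u + v) = retract u + retract v"
    by (simp add: retract_add)
  show "\<And>k u. k < n \<Longrightarrow> u \<in> ?V \<Longrightarrow>
      retract (act (cycles f M i) (var k) u) = act (cycles f M i) (var k) (retract u)"
    by (simp add: cycles_def retract_act var_in_polys_in)
  show "\<And>u. u \<in> carr (cycles (f @ [h]) M i) \<Longrightarrow> retract u \<in> carr (cycles f M i)"
    by (rule retract_cycles)
  show "\<And>u. u \<in> carr (cycles f M i) \<Longrightarrow> retract u = u"
    unfolding cycles_def by (auto intro: retract_id)
qed

end

lemma reg_cycles_le_snoc_in_ideal: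
  assumes "graded_module n M" "\<forall>p\<in>set f. p \<in> polys_in n" "in_ideal n (set f) h"
  shows "reg n (cycles f M i) \<le> reg n (cycles (f @ [h]) M i)"
proof -
  obtain c where "\<forall>l. c l \<in> polys_in n" "h = (\<Sum>l<length f. c l * f ! l)"
    using in_ideal_set_nth_coeffs[OF assms(3)] by blast
  then interpret ideal_element n M f c h
    using assms by unfold_locales auto
  show ?thesis
    by (rule reg_cycles_le_snoc)
qed

theorem lemma1p5:
  fixes M :: "('k::field mpoly, 'm::ab_group_add) gmod"
    and f g :: "'k mpoly list" and n i :: nat
  assumes "graded_module n M"
    and "fin_gen n M"
    and "\<forall>p\<in>set f. p \<in> polys_in n \<and> is_homog p"
    and "\<forall>p\<in>set g. p \<in> polys_in n \<and> is_homog p \<and> in_ideal n (set f) p"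
  shows "reg n (cycles f M i) \<le> reg n (cycles (f @ g) M i)"
  using assms(4)
proof (induction g rule: rev_induct)
  case Nil
  show ?case
    by simp
next
  case (snoc x g)
  have "in_ideal n (set f) x"
    using snoc.prems by simp
  then have "in_ideal n (set (f @ g)) x"
    by (rule in_ideal_mono) auto
  moreover have "\<forall>p\<in>set (f @ g). p \<in> polys_in n"
    using assms(3) snoc.prems by auto
  ultimately have "reg n (cycles (f @ g) M i) \<le> reg n (cycles (f @ g @ [x]) M i)"
    using reg_cycles_le_snoc_in_ideal[OF assms(1), of "f @ g" x i] by simp
  moreover have "reg n (cycles f M i) \<le> reg n (cycles (f @ g) M i)"
    using snoc by simp
  ultimately show ?case
    by (rule order_trans[rotated])
qed

end
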